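(* Let $c>0$ and $\alpha\in(0,2)$, and let $s_{\alpha,c}$ be the SIGTRON function defined below. Then $s_{\alpha,c}$ has an inflection point $x_{ip}$ lying in the interior of $\mathrm{dom}(\sigma_{\alpha,c})$, given by $$x_{ip}=-\ln_{\alpha,c}\!\left(\frac{c\alpha}{2-\alpha}\right).$$ When $\alpha=1$, $x_{ip}=0$, which is the point where $s_{\alpha,c}=1/2$.
   Context: For $c>0$, $\alpha\ge0$, $\alpha\ne1$, put $c_\alpha=\frac{1}{\alpha-1}c^{1-\alpha}$ and $x_\alpha=\frac{1}{\alpha-1}x^{1-\alpha}$. The extended logarithm is $\ln_{\alpha,c}(x)=\ln(x/c)$ if $\alpha=1$ and $\ln_{\alpha,c}(x)=c_\alpha-x_\alpha$ otherwise (for $x>0$). The extended exponential is $\exp_{\alpha,c}(x)=c\exp(x)$ if $\alpha=1$ and $c\left(1-\frac{x}{c_\alpha}\right)^{1/(1-\alpha)}$ otherwise, with domain $\mathbb R$ if $\alpha=1$, $\{x\ge c_\alpha\}$ if $0\le\alpha<1$, $\{x<c_\alpha\}$ if $\alpha>1$. The extended asymmetric sigmoid is $\sigma_{\alpha,c}(x)=\frac{c}{c+\exp_{\alpha,c}(-x)}$ with domain $\mathbb R$ if $\alpha=1$, $\{x\le-c_\alpha\}$ if $0\le\alpha<1$, $\{x\ge -c_\alpha\}$ if $\alpha>1$ (with $\sigma_{\alpha,c}(-c_\alpha)=0$ for $\alpha>1$). SIGTRON is $s_{\alpha,c}(x)=\sigma_{\alpha,c}(x)$ on $\mathrm{dom}(\sigma_{\alpha,c})$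 and $s_{\alpha,c}(x)=\sigma_P(x)$ otherwise, where $\sigma_P(x)=1$ for $x\ge0$ and $0$ for $x<0$. An inflection point is a point where the second derivative vanishes and the concavity changes. *)

theory Defs
  imports "HOL-Analysis.Analysis"
begin

definition c_alpha :: "real \<Rightarrow> real \<Rightarrow> real" where
  "c_alpha \<alpha> c = (1 / (\<alpha> - 1)) * c powr (1 - \<alpha>)"

definition ext_ln :: "real \<Rightarrow> real \<Rightarrow> real \<Rightarrow> real" where
  "ext_ln \<alpha> c x = (if \<alpha> = 1 then ln (x / c)
                     else c_alpha \<alpha> c - (1 / (\<alpha> - 1)) * x powr (1 - \<alpha>))"

definition ext_exp :: "real \<Rightarrow> real \<Rightarrow> real \<Rightarrow> real" where
  "ext_exp \<alpha> c x = (if \<alpha> = 1 then c * exp x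
                      else c * (1 - x / c_alpha \<alpha> c) powr (1 / (1 - \<alpha>)))"

definition dom_sigma :: "real \<Rightarrow> real \<Rightarrow> real set" where
  "dom_sigma \<alpha> c = (if \<alpha> = 1 then UNIV
                      else if \<alpha> < 1 then {x. x \<le> - c_alpha \<alpha> c}
                      else {x. x \<ge> - c_alpha \<alpha> c})"

text \<open>Extended asymmetric sigmoid; for alpha > 1 its value at -c_alpha is 0 by convention.\<close>
definition ext_sigmoid :: "real \<Rightarrow> real \<Rightarrow> real \<Rightarrow> real" where
  "ext_sigmoid \<alpha> c x = (if \<alpha> > 1 \<and> x = - c_alpha \<alpha> c then 0
                          else c / (c + ext_exp \<alpha> c (- x)))"

definition heaviside :: "real \<Rightarrow> real" where
  "heaviside x = (if x \<ge> 0 then 1 else 0)"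

definition sigtron :: "real \<Rightarrow> real \<Rightarrow> real \<Rightarrow> real" where
  "sigtron \<alpha> c x = (if x \<in> dom_sigma \<alpha> c then ext_sigmoid \<alpha> c x else heaviside x)"

definition inflection_point :: "(real \<Rightarrow> real) \<Rightarrow> real \<Rightarrow> bool" where
  "inflection_point f x \<longleftrightarrow>
     (\<exists>\<delta>>0. \<exists>f' f''.
        (\<forall>y\<in>ball x \<delta>. (f has_real_derivative f' y) (at y) \<and> (f' has_real_derivative f'' y) (at y))
        \<and> f'' x = 0
        \<and> (((\<forall>y\<in>{x-\<delta><..<x}. f'' y > 0) \<and> (\<forall>y\<in>{x<..<x+\<delta>}. f'' y < 0))
           \<or> ((\<forall>y\<in>{x-\<delta><..<x}. f'' y < 0) \<and> (\<forall>y\<in>{x<..<x+\<delta>}. f'' y > 0))))"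

end

theory Submission
  imports Defs
begin

(* Near the candidate point the SIGTRON is 1 / (1 + g) with g strictly decreasing: g(x) = exp (- x)
   for alpha = 1, and otherwise g = u powr p with u(x) = 1 + x / c_alpha affine and
   p = 1 / (1 - alpha). The second derivative of 1 / (1 + g) has the sign of 2 g'^2 - g'' (1 + g);
   for g = u powr p with u' = b this is p (p + 1) b^2 u^(p - 2) (g - (p - 1) / (p + 1)), and
   p (p + 1) > 0 is exactly the hypothesis alpha < 2. As g is monotone, the concavity changes
   exactly where g = (p - 1) / (p + 1) = alpha / (2 - alpha), i.e. at
   x = - ln_{alpha,c} (c alpha / (2 - alpha)); for alpha = 1 the expression is g (g - 1),
   which vanishes at x = 0. *)

lemma has_real_derivative_inverse_one_plus:
  fixes g g' :: "real \<Rightarrow> real"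
  assumes "1 + g y \<noteq> 0" and "(g has_real_derivative g' y) (at y)"
  shows "((\<lambda>y. 1 / (1 + g y)) has_real_derivative - g' y / (1 + g y)^2) (at y)"
  using assms by (auto intro!: derivative_eq_intros simp: power2_eq_square)

lemma has_real_derivative_inverse_one_plus_deriv:
  fixes g g' g'' :: "real \<Rightarrow> real"
  assumes "(g has_real_derivative g' y) (at y)" and "(g' has_real_derivative g'' y) (at y)"
    and "1 + g y \<noteq> 0"
  shows "((\<lambda>y. - g' y / (1 + g y)^2) has_real_derivative
           (2 * (g' y)^2 - g'' y * (1 + g y)) / (1 + g y)^3) (at y)"
proof -
  have "((\<lambda>y. - g' y / (1 + g y)^2) has_real_derivative
           - ((g'' y * (1 + g y)^2 - g' y * (2 * (1 + g y) * g' y)) / ((1 + g y)^2)^2)) (at y)"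
    using assms by (auto intro!: derivative_eq_intros)
  moreover have "- ((g'' y * (1 + g y)^2 - g' y * (2 * (1 + g y) * g' y)) / ((1 + g y)^2)^2)
      = (2 * (g' y)^2 - g'' y * (1 + g y)) / (1 + g y)^3"
    using assms(3) by (simp add: divide_simps) algebra
  ultimately show ?thesis by simp
qed

lemma inflection_point_inverse_one_plus:
  fixes f g g' g'' K :: "real \<Rightarrow> real"
  assumes "open S" and "x \<in> S"
    and f: "\<And>y. y \<in> S \<Longrightarrow> f y = 1 / (1 + g y)"
    and pos: "\<And>y. y \<in> S \<Longrightarrow> g y > 0"
    and g': "\<And>y. y \<in> S \<Longrightarrow> (g has_real_derivative g' y) (at y)"
    and g'': "\<And>y. y \<in> S \<Longrightarrow> (g' has_real_derivative g'' y) (at y)"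
    and decreasing: "\<And>y. y \<in> S \<Longrightarrow> g' y < 0"
    and numerator: "\<And>y. y \<in> S \<Longrightarrow> 2 * (g' y)^2 - g'' y * (1 + g y) = K y * (g y - g x)"
    and K: "\<And>y. y \<in> S \<Longrightarrow> K y > 0"
  shows "inflection_point f x"
proof -
  obtain \<delta> where "\<delta> > 0" and ball: "ball x \<delta> \<subseteq> S"
    using \<open>open S\<close> \<open>x \<in> S\<close> open_contains_ball by blast
  define f' where "f' = (\<lambda>y. - g' y / (1 + g y)^2)"
  define f'' where "f'' = (\<lambda>y. K y * (g y - g x) / (1 + g y)^3)"
  have derivs: "(f has_real_derivative f' y) (at y) \<and> (f' has_real_derivative f'' y) (at y)"
    if "y \<in> ball x \<delta>" for y
  proof
    have "y \<in> S" using that ball by blast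
    then have "1 + g y \<noteq> 0" using pos[of y] by linarith
    then have "((\<lambda>y. 1 / (1 + g y)) has_real_derivative f' y) (at y)"
      unfolding f'_def using g'[OF \<open>y \<in> S\<close>] by (rule has_real_derivative_inverse_one_plus)
    then show "(f has_real_derivative f' y) (at y)"
      by (rule has_field_derivative_transform_within_open[OF _ \<open>open S\<close> \<open>y \<in> S\<close>]) (simp add: f)
    have "(f' has_real_derivative (2 * (g' y)^2 - g'' y * (1 + g y)) / (1 + g y)^3) (at y)"
      unfolding f'_def
      using g'[OF \<open>y \<in> S\<close>] g''[OF \<open>y \<in> S\<close>] \<open>1 + g y \<noteq> 0\<close>
      by (rule has_real_derivative_inverse_one_plus_deriv)
    then show "(f' has_real_derivative f'' y) (at y)"
      by (simp add: f''_def numerator \<open>y \<in> S\<close>)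
  qed
  have antitone: "g z < g y" if "y < z" "y \<in> ball x \<delta>" "z \<in> ball x \<delta>" for y z
  proof (rule DERIV_neg_imp_decreasing[OF \<open>y < z\<close>])
    fix t assume "y \<le> t" "t \<le> z"
    with that have "t \<in> S" using ball by (auto simp: dist_real_def)
    then show "\<exists>d. (g has_real_derivative d) (at t) \<and> d < 0" using g' decreasing by blast
  qed
  have sign: "(0 < f'' y \<longleftrightarrow> g x < g y) \<and> (f'' y < 0 \<longleftrightarrow> g y < g x)" if "y \<in> ball x \<delta>" for y
  proof -
    have "y \<in> S" using that ball by blast
    then have "0 < K y" "0 < (1 + g y)^3" using pos K by (simp_all add: add_pos_pos)
    then show ?thesis
      by (simp add: f''_def zero_less_divide_iff zero_less_mult_iff divide_less_0_iff mult_less_0_iff)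
  qed
  have "\<forall>y\<in>{x-\<delta><..<x}. f'' y > 0"
    using antitone sign \<open>\<delta> > 0\<close> by (auto simp: dist_real_def)
  moreover have "\<forall>y\<in>{x<..<x+\<delta>}. f'' y < 0"
    using antitone sign \<open>\<delta> > 0\<close> by (auto simp: dist_real_def)
  moreover have "f'' x = 0" by (simp add: f''_def)
  ultimately show ?thesis
    unfolding inflection_point_def using \<open>\<delta> > 0\<close> derivs by blast
qed

lemma inflection_point_logistic: "inflection_point (\<lambda>y. 1 / (1 + exp (- y))) 0"
  by (rule inflection_point_inverse_one_plus[where S = UNIV and g = "\<lambda>y. exp (- y)"
        and g' = "\<lambda>y. - exp (- y)" and g'' = "\<lambda>y. exp (- y)" and K = "\<lambda>y. exp (- y)"])
    (auto intro!: derivative_eq_intros simp: power2_eq_square algebra_simps)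

lemma has_real_derivative_affine_powr:
  fixes a b p y :: real
  assumes "0 < a + b * y"
  shows "((\<lambda>y. (a + b * y) powr p) has_real_derivative p * b * (a + b * y) powr (p - 1)) (at y)"
  using assms by (auto intro!: derivative_eq_intros)

lemma affine_powr_inflection_numerator:
  fixes b p u :: real
  assumes "0 < u"
  shows "2 * (p * b * u powr (p - 1))^2 - p * (p - 1) * b^2 * u powr (p - 2) * (1 + u powr p)
       = p * b^2 * u powr (p - 2) * ((p + 1) * u powr p - (p - 1))"
proof -
  have "(u powr (p - 1))^2 = u powr (p - 2) * u powr p"
    using assms by (simp add: power2_eq_square powr_add[symmetric])
  then show ?thesis by (simp add: power_mult_distrib power2_eq_square algebra_simps)
qed

lemma inflection_point_inverse_one_plus_affine_powr:
  fixes a b p x :: real and f :: "real \<Rightarrow> real"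
  assumes "open S" and "x \<in> S"
    and pos: "\<And>y. y \<in> S \<Longrightarrow> 0 < a + b * y"
    and f: "\<And>y. y \<in> S \<Longrightarrow> f y = 1 / (1 + (a + b * y) powr p)"
    and "p * b < 0" and "0 < p * (p + 1)"
    and at_x: "(a + b * x) powr p = (p - 1) / (p + 1)"
  shows "inflection_point f x"
proof (rule inflection_point_inverse_one_plus[OF \<open>open S\<close> \<open>x \<in> S\<close> f])
  fix y assume "y \<in> S"
  define u where "u = a + b * y"
  have "0 < u" using pos[OF \<open>y \<in> S\<close>] by (simp add: u_def)
  show "0 < (a + b * y) powr p" using \<open>0 < u\<close> by (simp add: u_def)
  show "((\<lambda>y. (a + b * y) powr p) has_real_derivative p * b * (a + b * y) powr (p - 1)) (at y)"
    using \<open>0 < u\<close> unfolding u_def by (rule has_real_derivative_affine_powr)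
  show "((\<lambda>y. p * b * (a + b * y) powr (p - 1)) has_real_derivative
          p * (p - 1) * b^2 * (a + b * y) powr (p - 2)) (at y)"
    using DERIV_cmult[OF has_real_derivative_affine_powr[OF \<open>0 < u\<close>[unfolded u_def], of "p - 1"],
        of "p * b"]
    by (simp add: power2_eq_square algebra_simps)
  show "p * b * (a + b * y) powr (p - 1) < 0"
    using \<open>p * b < 0\<close> \<open>0 < u\<close> by (simp add: u_def mult_neg_pos)
  have "p + 1 \<noteq> 0" using \<open>0 < p * (p + 1)\<close> by auto
  then show "2 * (p * b * (a + b * y) powr (p - 1))^2
        - p * (p - 1) * b^2 * (a + b * y) powr (p - 2) * (1 + (a + b * y) powr p)
      = p * (p + 1) * b^2 * (a + b * y) powr (p - 2) * ((a + b * y) powr p - (a + b * x) powr p)"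
    unfolding at_x affine_powr_inflection_numerator[OF \<open>0 < u\<close>[unfolded u_def]]
    by (simp add: field_simps)
  have "b \<noteq> 0" using \<open>p * b < 0\<close> by auto
  then show "0 < p * (p + 1) * b^2 * (a + b * y) powr (p - 2)"
    using \<open>0 < p * (p + 1)\<close> \<open>0 < u\<close> by (simp add: u_def)
qed

lemma divide_add_mult_self:
  fixes c t :: real
  assumes "c \<noteq> 0"
  shows "c / (c + c * t) = 1 / (1 + t)"
proof -
  have "c + c * t = c * (1 + t)" by (simp add: algebra_simps)
  then show ?thesis using assms by simp
qed

lemma sigtron_one:
  fixes c :: real
  assumes "c > 0"
  shows "sigtron 1 c = (\<lambda>y. 1 / (1 + exp (- y)))"
proof
  fix y :: real
  show "sigtron 1 c y = 1 / (1 + exp (- y))"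
    using assms
    by (simp add: sigtron_def dom_sigma_def ext_sigmoid_def ext_exp_def divide_add_mult_self)
qed

lemma c_alpha_nonzero:
  fixes c \<alpha> :: real
  assumes "c > 0" and "\<alpha> \<noteq> 1"
  shows "c_alpha \<alpha> c \<noteq> 0"
  using assms by (simp add: c_alpha_def)

lemma c_alpha_neg_iff:
  fixes c \<alpha> :: real
  assumes "c > 0"
  shows "c_alpha \<alpha> c < 0 \<longleftrightarrow> \<alpha> < 1"
  using assms by (simp add: c_alpha_def divide_less_0_iff)

lemma c_alpha_pos_iff:
  fixes c \<alpha> :: real
  assumes "c > 0"
  shows "0 < c_alpha \<alpha> c \<longleftrightarrow> 1 < \<alpha>"
  using assms by (simp add: c_alpha_def zero_less_divide_iff)

lemma sigtron_eq_generalised_logistic: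
  fixes c \<alpha> y :: real
  assumes "c > 0" and "\<alpha> \<noteq> 1" and u: "0 < 1 + y / c_alpha \<alpha> c"
  shows "y \<in> dom_sigma \<alpha> c"
    and "sigtron \<alpha> c y = 1 / (1 + (1 + y / c_alpha \<alpha> c) powr (1 / (1 - \<alpha>)))"
proof -
  have "0 < (c_alpha \<alpha> c + y) / c_alpha \<alpha> c"
    using u c_alpha_nonzero[OF \<open>c > 0\<close> \<open>\<alpha> \<noteq> 1\<close>] by (simp add: add_divide_distrib)
  then have "c_alpha \<alpha> c < 0 \<and> y < - c_alpha \<alpha> c \<or> 0 < c_alpha \<alpha> c \<and> - c_alpha \<alpha> c < y"
    by (auto simp: zero_less_divide_iff)
  then have dom: "y \<in> dom_sigma \<alpha> c" and ne: "\<not> (1 < \<alpha> \<and> y = - c_alpha \<alpha> c)"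
    using \<open>\<alpha> \<noteq> 1\<close> c_alpha_neg_iff c_alpha_pos_iff \<open>c > 0\<close> by (auto simp: dom_sigma_def)
  show "y \<in> dom_sigma \<alpha> c" by (rule dom)
  show "sigtron \<alpha> c y = 1 / (1 + (1 + y / c_alpha \<alpha> c) powr (1 / (1 - \<alpha>)))"
    using dom ne \<open>\<alpha> \<noteq> 1\<close> \<open>c > 0\<close> c_alpha_nonzero
    by (simp add: sigtron_def ext_sigmoid_def ext_exp_def divide_add_mult_self)
qed

lemma minus_ext_ln_scaled:
  fixes c \<alpha> r :: real
  assumes "c > 0" and "\<alpha> \<noteq> 1" and "r > 0"
  shows "- ext_ln \<alpha> c (c * r) = c_alpha \<alpha> c * (r powr (1 - \<alpha>) - 1)"
  using assms by (simp add: ext_ln_def c_alpha_def powr_mult diff_divide_distrib algebra_simps)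

lemma sigtron_inflection_point:
  fixes c \<alpha> :: real
  assumes "c > 0" and "0 < \<alpha>" and "\<alpha> < 2" and "\<alpha> \<noteq> 1"
  defines "x \<equiv> - ext_ln \<alpha> c (c * \<alpha> / (2 - \<alpha>))"
  shows "x \<in> interior (dom_sigma \<alpha> c) \<and> inflection_point (sigtron \<alpha> c) x"
proof -
  define ca where "ca = c_alpha \<alpha> c"
  define p where "p = 1 / (1 - \<alpha>)"
  define r where "r = \<alpha> / (2 - \<alpha>)"
  define S where "S = {y. 0 < 1 + y / ca}"
  have "ca \<noteq> 0" using c_alpha_nonzero[OF \<open>c > 0\<close> \<open>\<alpha> \<noteq> 1\<close>] by (simp add: ca_def)
  have "r > 0" using \<open>0 < \<alpha>\<close> \<open>\<alpha> < 2\<close> by (simp add: r_def)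
  have "x = ca * (r powr (1 - \<alpha>) - 1)"
    using minus_ext_ln_scaled[OF \<open>c > 0\<close> \<open>\<alpha> \<noteq> 1\<close> \<open>r > 0\<close>] by (simp add: x_def r_def ca_def)
  then have u_x: "1 + x / ca = r powr (1 - \<alpha>)" using \<open>ca \<noteq> 0\<close> by simp
  have "open S"
    unfolding S_def using \<open>ca \<noteq> 0\<close> by (intro open_Collect_less continuous_intros) auto
  have "x \<in> S" using u_x \<open>r > 0\<close> by (simp add: S_def)
  have "S \<subseteq> dom_sigma \<alpha> c"
    using sigtron_eq_generalised_logistic(1)[OF \<open>c > 0\<close> \<open>\<alpha> \<noteq> 1\<close>] by (auto simp: S_def ca_def)
  then have "x \<in> interior (dom_sigma \<alpha> c)"
    using \<open>open S\<close> \<open>x \<in> S\<close> interior_maximal by blast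
  moreover have "inflection_point (sigtron \<alpha> c) x"
  proof (rule inflection_point_inverse_one_plus_affine_powr[OF \<open>open S\<close> \<open>x \<in> S\<close>,
        where a = 1 and b = "1 / ca" and p = p])
    fix y assume "y \<in> S"
    then show "0 < 1 + 1 / ca * y" by (simp add: S_def)
    show "sigtron \<alpha> c y = 1 / (1 + (1 + 1 / ca * y) powr p)"
      using sigtron_eq_generalised_logistic(2)[OF \<open>c > 0\<close> \<open>\<alpha> \<noteq> 1\<close>] \<open>y \<in> S\<close>
      by (simp add: S_def ca_def p_def)
  next
    have "p * (1 / ca) = - 1 / c powr (1 - \<alpha>)"
      using \<open>\<alpha> \<noteq> 1\<close> \<open>c > 0\<close> by (simp add: p_def ca_def c_alpha_def field_simps)
    then show "p * (1 / ca) < 0" using \<open>c > 0\<close> by simp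
    have "p * (p + 1) = (2 - \<alpha>) / (1 - \<alpha>)^2"
      using \<open>\<alpha> \<noteq> 1\<close> by (simp add: p_def field_simps power2_eq_square)
    then show "0 < p * (p + 1)" using \<open>\<alpha> < 2\<close> \<open>\<alpha> \<noteq> 1\<close> by simp
    have "p - 1 = \<alpha> / (1 - \<alpha>)" "p + 1 = (2 - \<alpha>) / (1 - \<alpha>)"
      using \<open>\<alpha> \<noteq> 1\<close> by (simp_all add: p_def field_simps)
    then have "(p - 1) / (p + 1) = r"
      using \<open>\<alpha> \<noteq> 1\<close> by (simp add: r_def)
    then show "(1 + 1 / ca * x) powr p = (p - 1) / (p + 1)"
      using u_x \<open>r > 0\<close> \<open>\<alpha> \<noteq> 1\<close> by (simp add: powr_powr p_def)
  qed
  ultimately show ?thesis ..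
qed

theorem corollary1:
  fixes c \<alpha> :: real
  assumes "c > 0" and "0 < \<alpha>" and "\<alpha> < 2"
  shows "let x_ip = - ext_ln \<alpha> c (c * \<alpha> / (2 - \<alpha>)) in
           x_ip \<in> interior (dom_sigma \<alpha> c)
         \<and> inflection_point (sigtron \<alpha> c) x_ip
         \<and> (\<alpha> = 1 \<longrightarrow> x_ip = 0 \<and> sigtron \<alpha> c x_ip = 1 / 2)"
proof (cases "\<alpha> = 1")
  case True
  have "- ext_ln \<alpha> c (c * \<alpha> / (2 - \<alpha>)) = 0" using True \<open>c > 0\<close> by (simp add: ext_ln_def)
  moreover have "sigtron 1 c 0 = 1 / 2" by (simp add: sigtron_one[OF \<open>c > 0\<close>])
  ultimately show ?thesis
    using True inflection_point_logistic by (simp add: Let_def sigtron_one[OF \<open>c > 0\<close>] dom_sigma_def)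
next
  case False
  then show ?thesis using sigtron_inflection_point[OF assms False] by (simp add: Let_def)
qed

end
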